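(* Let $\Theta\vdash^\top t$ be a $\beta$-normal $\mathsf{F_{<:}^\top}$ term-in-context and $\Theta\vdash^\top T$ an $\mathsf{F_{<:}^\top}$ type. If $\Theta\vdash t:T$ is derivable in System $\mathsf{F_{<:}^{K\top}}$, then $\Theta\vdash^\top t:T$ is derivable in System $\mathsf{F_{<:}^\top}$.
   Context: System $\mathsf{F_{<:}^{K\top}}$: raw types $T ::= \top \mid X \mid T\to T \mid \forall^{\mathsf K}(X<:T).T \mid \forall^\top(X<:T).T$, up to $\alpha$-conversion. Contexts $\Theta$: finite sequences of $X<:T$ or $x:T$ with distinct variables, each type well-formed over the preceding part. Subtyping $\Theta\vdash S<:T$: (Var) $\Theta,X<:T,\Theta'\vdash X<:T$; (Top) $T<:\top$; (Refl); (Trans); ($\to$) from $S'<:S$, $T<:T'$ infer $S\to T<:S'\to T'$; ($\forall$-Fun) from $\Theta,X<:S\vdash T<:T'$ infer $\forall^{\mathsf K}(X<:S).T<:\forall^{\mathsf K}(X<:S).T'$; ($\forall$-Loc) from $\Theta\vdash T_0<:S_0$, $\Theta,X<:S_0\vdash S_1<:T_1$ infer $\forall^{\mathsf K}(X<:S_0).S_1<:\forall^\top(X<:T_0).T_1$; ($\forall$-Top) from $\Theta\vdash T_0<:S_0$, $\Theta,X<:\top\vdash S_1<:T_1$ infer $\forall^\top(X<:S_0).S_1<:\forall^\top(X<:T_0).T_1$. Raw terms $t ::= \mathsf{top}\mid x\mid\lambda(x:T).t\mid\Lambda(X<:T).t\mid t\,t\mid t\{T\}$. Typing: $\mathsf{top}:\top$;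 $\Theta,x:T,\Theta'\vdash x:T$; (sub) from $t:T$, $T<:T'$ infer $t:T'$; ($\to$-i) from $\Theta,x:S\vdash t:T$ infer $\lambda(x:S).t:S\to T$; ($\to$-e) from $t:S\to T$, $s:S$ infer $t\,s:T$; ($\forall$-i) from $\Theta,X<:S\vdash t:T$ infer $\Theta\vdash\Lambda(X<:S).t:\forall^{\mathsf K}(X<:S).T$; ($\forall$-e) from $\Theta\vdash t:\forall^\top(X<:S).T$ and $\Theta\vdash S'<:S$ infer $\Theta\vdash t\{S'\}:T[S'/X]$. $\mathsf{F_{<:}^\top}$ types, contexts and terms are those in which only $\forall^\top$ occurs. System $\mathsf{F_{<:}^\top}$ (judgements $\vdash^\top$) has subtyping rules Var, Top, Refl, Trans, $\to$, $\forall$-Top only, and the same typing rules except that ($\forall$-i) concludes $\Theta\vdash^\top\Lambda(X<:S).t:\forall^\top(X<:S).T$. A term is $\beta$-normal if it has no subterm of the form $(\lambda(x:S).t)\,s$ or $(\Lambda(X<:S).t)\{R\}$. *)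

theory Defs
  imports Main
begin

text \<open>De Bruijn representation (in the style of the POPLmark Isabelle development):
  types and term variables share one index space, index i refers to the i-th
  binding of the context counting from the most recent one (head of the list).\<close>

datatype ty =
    TTop
  | TV nat
  | Arr ty ty
  | AllK ty ty
  | AllT ty ty

datatype tm =
    top
  | V nat
  | Lam ty tm
  | TLam ty tm
  | App tm tm
  | TApp tm ty

datatype bind = VarB ty | TVarB ty

type_synonym env = "bind list"

fun shift_ty :: "nat \<Rightarrow> nat \<Rightarrow> ty \<Rightarrow> ty" where
  "shift_ty n k TTop = TTop"
| "shift_ty n k (TV i) = (if i < k then TV i else TV (i + n))"
| "shift_ty n k (Arr S T) = Arr (shift_ty n k S) (shift_ty n k T)"
| "shift_ty n k (AllK S T) = AllK (shift_ty n k S) (shift_ty n (Suc k) T)"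
| "shift_ty n k (AllT S T) = AllT (shift_ty n k S) (shift_ty n (Suc k) T)"

fun subst_ty :: "nat \<Rightarrow> ty \<Rightarrow> ty \<Rightarrow> ty" where
  "subst_ty k S TTop = TTop"
| "subst_ty k S (TV i) =
     (if k < i then TV (i - 1) else if i = k then shift_ty k 0 S else TV i)"
| "subst_ty k S (Arr T1 T2) = Arr (subst_ty k S T1) (subst_ty k S T2)"
| "subst_ty k S (AllK T1 T2) = AllK (subst_ty k S T1) (subst_ty (Suc k) S T2)"
| "subst_ty k S (AllT T1 T2) = AllT (subst_ty k S T1) (subst_ty (Suc k) S T2)"

fun wf_ty :: "env \<Rightarrow> ty \<Rightarrow> bool" where
  "wf_ty \<Gamma> TTop = True"
| "wf_ty \<Gamma> (TV i) = (i < length \<Gamma> \<and> (\<exists>T. \<Gamma> ! i = TVarB T))"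
| "wf_ty \<Gamma> (Arr S T) = (wf_ty \<Gamma> S \<and> wf_ty \<Gamma> T)"
| "wf_ty \<Gamma> (AllK S T) = (wf_ty \<Gamma> S \<and> wf_ty (TVarB S # \<Gamma>) T)"
| "wf_ty \<Gamma> (AllT S T) = (wf_ty \<Gamma> S \<and> wf_ty (TVarB S # \<Gamma>) T)"

fun wf_env :: "env \<Rightarrow> bool" where
  "wf_env [] = True"
| "wf_env (VarB T # \<Gamma>) = (wf_ty \<Gamma> T \<and> wf_env \<Gamma>)"
| "wf_env (TVarB T # \<Gamma>) = (wf_ty \<Gamma> T \<and> wf_env \<Gamma>)"

fun wf_tm :: "env \<Rightarrow> tm \<Rightarrow> bool" where
  "wf_tm \<Gamma> top = True"
| "wf_tm \<Gamma> (V i) = (i < length \<Gamma> \<and> (\<exists>T. \<Gamma> ! i = VarB T))"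
| "wf_tm \<Gamma> (Lam S t) = (wf_ty \<Gamma> S \<and> wf_tm (VarB S # \<Gamma>) t)"
| "wf_tm \<Gamma> (TLam S t) = (wf_ty \<Gamma> S \<and> wf_tm (TVarB S # \<Gamma>) t)"
| "wf_tm \<Gamma> (App t s) = (wf_tm \<Gamma> t \<and> wf_tm \<Gamma> s)"
| "wf_tm \<Gamma> (TApp t S) = (wf_tm \<Gamma> t \<and> wf_ty \<Gamma> S)"

text \<open>The F_{<:}^Top fragment: only \<forall>^Top occurs.\<close>
fun top_ty :: "ty \<Rightarrow> bool" where
  "top_ty TTop = True"
| "top_ty (TV i) = True"
| "top_ty (Arr S T) = (top_ty S \<and> top_ty T)"
| "top_ty (AllK S T) = False"
| "top_ty (AllT S T) = (top_ty S \<and> top_ty T)"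

fun top_bind :: "bind \<Rightarrow> bool" where
  "top_bind (VarB T) = top_ty T"
| "top_bind (TVarB T) = top_ty T"

definition top_env :: "env \<Rightarrow> bool" where
  "top_env \<Gamma> = (\<forall>b \<in> set \<Gamma>. top_bind b)"

fun top_tm :: "tm \<Rightarrow> bool" where
  "top_tm top = True"
| "top_tm (V i) = True"
| "top_tm (Lam S t) = (top_ty S \<and> top_tm t)"
| "top_tm (TLam S t) = (top_ty S \<and> top_tm t)"
| "top_tm (App t s) = (top_tm t \<and> top_tm s)"
| "top_tm (TApp t S) = (top_ty S \<and> top_tm t)"

fun beta_normal :: "tm \<Rightarrow> bool" where
  "beta_normal top = True"
| "beta_normal (V i) = True"
| "beta_normal (Lam S t) = beta_normal t"
| "beta_normal (TLam S t) = beta_normal t"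
| "beta_normal (App t s) =
     ((case t of Lam _ _ \<Rightarrow> False | _ \<Rightarrow> True) \<and> beta_normal t \<and> beta_normal s)"
| "beta_normal (TApp t S) =
     ((case t of TLam _ _ \<Rightarrow> False | _ \<Rightarrow> True) \<and> beta_normal t)"

inductive subK :: "env \<Rightarrow> ty \<Rightarrow> ty \<Rightarrow> bool" where
  SK_Var: "\<lbrakk>wf_env \<Gamma>; i < length \<Gamma>; \<Gamma> ! i = TVarB T\<rbrakk>
           \<Longrightarrow> subK \<Gamma> (TV i) (shift_ty (Suc i) 0 T)"
| SK_Top: "\<lbrakk>wf_env \<Gamma>; wf_ty \<Gamma> T\<rbrakk> \<Longrightarrow> subK \<Gamma> T TTop"
| SK_Refl: "\<lbrakk>wf_env \<Gamma>; wf_ty \<Gamma> T\<rbrakk> \<Longrightarrow> subK \<Gamma> T T"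
| SK_Trans: "\<lbrakk>subK \<Gamma> S U; subK \<Gamma> U T\<rbrakk> \<Longrightarrow> subK \<Gamma> S T"
| SK_Arr: "\<lbrakk>subK \<Gamma> S' S; subK \<Gamma> T T'\<rbrakk> \<Longrightarrow> subK \<Gamma> (Arr S T) (Arr S' T')"
| SK_AllFun: "subK (TVarB S # \<Gamma>) T T' \<Longrightarrow> subK \<Gamma> (AllK S T) (AllK S T')"
| SK_AllLoc: "\<lbrakk>subK \<Gamma> T0 S0; subK (TVarB S0 # \<Gamma>) S1 T1\<rbrakk>
              \<Longrightarrow> subK \<Gamma> (AllK S0 S1) (AllT T0 T1)"
| SK_AllTop: "\<lbrakk>subK \<Gamma> T0 S0; subK (TVarB TTop # \<Gamma>) S1 T1\<rbrakk>
              \<Longrightarrow> subK \<Gamma> (AllT S0 S1) (AllT T0 T1)"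

inductive typK :: "env \<Rightarrow> tm \<Rightarrow> ty \<Rightarrow> bool" where
  TK_Top: "wf_env \<Gamma> \<Longrightarrow> typK \<Gamma> top TTop"
| TK_Var: "\<lbrakk>wf_env \<Gamma>; i < length \<Gamma>; \<Gamma> ! i = VarB T\<rbrakk>
           \<Longrightarrow> typK \<Gamma> (V i) (shift_ty (Suc i) 0 T)"
| TK_Sub: "\<lbrakk>typK \<Gamma> t T; subK \<Gamma> T T'\<rbrakk> \<Longrightarrow> typK \<Gamma> t T'"
| TK_Abs: "typK (VarB S # \<Gamma>) t (shift_ty 1 0 T) \<Longrightarrow> typK \<Gamma> (Lam S t) (Arr S T)"
| TK_App: "\<lbrakk>typK \<Gamma> t (Arr S T); typK \<Gamma> s S\<rbrakk> \<Longrightarrow> typK \<Gamma> (App t s) T"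
| TK_TAbs: "typK (TVarB S # \<Gamma>) t T \<Longrightarrow> typK \<Gamma> (TLam S t) (AllK S T)"
| TK_TApp: "\<lbrakk>typK \<Gamma> t (AllT S T); subK \<Gamma> S' S\<rbrakk>
            \<Longrightarrow> typK \<Gamma> (TApp t S') (subst_ty 0 S' T)"

inductive subT :: "env \<Rightarrow> ty \<Rightarrow> ty \<Rightarrow> bool" where
  ST_Var: "\<lbrakk>wf_env \<Gamma>; i < length \<Gamma>; \<Gamma> ! i = TVarB T\<rbrakk>
           \<Longrightarrow> subT \<Gamma> (TV i) (shift_ty (Suc i) 0 T)"
| ST_Top: "\<lbrakk>wf_env \<Gamma>; wf_ty \<Gamma> T\<rbrakk> \<Longrightarrow> subT \<Gamma> T TTop"
| ST_Refl: "\<lbrakk>wf_env \<Gamma>; wf_ty \<Gamma> T\<rbrakk> \<Longrightarrow> subT \<Gamma> T T"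
| ST_Trans: "\<lbrakk>subT \<Gamma> S U; subT \<Gamma> U T\<rbrakk> \<Longrightarrow> subT \<Gamma> S T"
| ST_Arr: "\<lbrakk>subT \<Gamma> S' S; subT \<Gamma> T T'\<rbrakk> \<Longrightarrow> subT \<Gamma> (Arr S T) (Arr S' T')"
| ST_AllTop: "\<lbrakk>subT \<Gamma> T0 S0; subT (TVarB TTop # \<Gamma>) S1 T1\<rbrakk>
              \<Longrightarrow> subT \<Gamma> (AllT S0 S1) (AllT T0 T1)"

inductive typT :: "env \<Rightarrow> tm \<Rightarrow> ty \<Rightarrow> bool" where
  TT_Top: "wf_env \<Gamma> \<Longrightarrow> typT \<Gamma> top TTop"
| TT_Var: "\<lbrakk>wf_env \<Gamma>; i < length \<Gamma>; \<Gamma> ! i = VarB T\<rbrakk>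
           \<Longrightarrow> typT \<Gamma> (V i) (shift_ty (Suc i) 0 T)"
| TT_Sub: "\<lbrakk>typT \<Gamma> t T; subT \<Gamma> T T'\<rbrakk> \<Longrightarrow> typT \<Gamma> t T'"
| TT_Abs: "typT (VarB S # \<Gamma>) t (shift_ty 1 0 T) \<Longrightarrow> typT \<Gamma> (Lam S t) (Arr S T)"
| TT_App: "\<lbrakk>typT \<Gamma> t (Arr S T); typT \<Gamma> s S\<rbrakk> \<Longrightarrow> typT \<Gamma> (App t s) T"
| TT_TAbs: "typT (TVarB S # \<Gamma>) t T \<Longrightarrow> typT \<Gamma> (TLam S t) (AllT S T)"
| TT_TApp: "\<lbrakk>typT \<Gamma> t (AllT S T); subT \<Gamma> S' S\<rbrakk>
            \<Longrightarrow> typT \<Gamma> (TApp t S') (subst_ty 0 S' T)"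

end

theory Submission
  imports Defs
begin

text \<open>
  Subtyping of F_{<:}^{K Top} is captured by an algorithmic relation without a transitivity
  rule and without well-formedness side conditions. Transitivity is admissible: the only
  delicate case composes \<forall>-Loc with \<forall>-Top, where the bound variable on the right is
  bounded by Top, and a Top-bounded variable can only be promoted to Top, so its bound may be
  replaced by anything. Between F_{<:}^Top types in an F_{<:}^Top context an algorithmic
  derivation uses only F_{<:}^Top rules, hence is an F_{<:}^Top derivation.

  The theorem follows by induction on the \<beta>-normal term t, with two invariants: every
  well-formed F_{<:}^Top type algorithmically above a K-type of t is an F_{<:}^Top type of t;
  and, if t is not an abstraction, every K-type of t lies above some F_{<:}^Top type of t.
  The second one drives the elimination cases: by \<beta>-normality (and typing) the head of an
  application is not an abstraction, so it has a genuine F_{<:}^Top type, and that type can be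
  exposed in F_{<:}^Top as an arrow or \<forall>^Top type. Abstractions need not satisfy it: their
  K-types are built from the K-types of their bodies, which may involve \<forall>^K.
\<close>

lemma shift_ty_shift_ty_merge:
  "c \<le> d \<Longrightarrow> d \<le> c + j \<Longrightarrow> shift_ty n d (shift_ty j c T) = shift_ty (n + j) c T"
  by (induction T arbitrary: c d) auto

lemma shift_ty_shift_ty_comm:
  "c \<le> d \<Longrightarrow> shift_ty m (d + n) (shift_ty n c U) = shift_ty n c (shift_ty m d U)"
  by (induction U arbitrary: c d) (auto, (metis add_Suc Suc_le_mono)+)

lemma subst_ty_shift_ty_comm:
  "d \<le> j \<Longrightarrow> subst_ty (j + n) S (shift_ty n d U) = shift_ty n d (subst_ty j S U)"
  by (induction U arbitrary: d j)
    (auto simp: shift_ty_shift_ty_merge add.commute, (metis add_Suc Suc_le_mono)+)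

lemma subst_ty_shift_ty_cancel:
  "d \<le> k \<Longrightarrow> k < d + n \<Longrightarrow> subst_ty k S (shift_ty n d U) = shift_ty (n - 1) d U"
  by (induction U arbitrary: d k) auto

lemma top_ty_shift_ty [simp]: "top_ty (shift_ty n k T) = top_ty T"
  by (induction T arbitrary: k) auto

lemma top_ty_subst_ty: "top_ty S \<Longrightarrow> top_ty T \<Longrightarrow> top_ty (subst_ty k S T)"
  by (induction T arbitrary: k) auto

fun is_TVarB :: "bind \<Rightarrow> bool" where
  "is_TVarB (TVarB _) = True"
| "is_TVarB (VarB _) = False"

lemma ex_TVarB_iff: "(\<exists>T. b = TVarB T) \<longleftrightarrow> is_TVarB b"
  by (cases b) auto

lemma wf_ty_cong: "map is_TVarB \<Gamma> = map is_TVarB \<Gamma>' \<Longrightarrow> wf_ty \<Gamma> T = wf_ty \<Gamma>' T"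
proof (induction T arbitrary: \<Gamma> \<Gamma>')
  case (TV i)
  have "length \<Gamma> = length \<Gamma>'" by (metis TV length_map)
  moreover have "i < length \<Gamma> \<Longrightarrow> is_TVarB (\<Gamma> ! i) = is_TVarB (\<Gamma>' ! i)"
    by (metis TV calculation nth_map)
  ultimately show ?case by (auto simp: ex_TVarB_iff)
next
  case (Arr A B)
  show ?case using Arr.IH(1)[OF Arr.prems] Arr.IH(2)[OF Arr.prems] by simp
next
  case (AllK A B)
  have "map is_TVarB (TVarB A # \<Gamma>) = map is_TVarB (TVarB A # \<Gamma>')" using AllK.prems by simp
  from AllK.IH(2)[OF this] show ?case using AllK.IH(1)[OF AllK.prems] by simp
next
  case (AllT A B)
  have "map is_TVarB (TVarB A # \<Gamma>) = map is_TVarB (TVarB A # \<Gamma>')" using AllT.prems by simp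
  from AllT.IH(2)[OF this] show ?case using AllT.IH(1)[OF AllT.prems] by simp
qed simp

lemma wf_ty_rebind: "wf_ty (TVarB A # \<Gamma>) T \<Longrightarrow> wf_ty (TVarB B # \<Gamma>) T"
  using wf_ty_cong[of "TVarB A # \<Gamma>" "TVarB B # \<Gamma>"] by simp

lemma wf_ty_shift_ty:
  "wf_ty (\<Delta> @ \<Gamma>) T \<Longrightarrow> wf_ty (\<Delta> @ \<Theta> @ \<Gamma>) (shift_ty (length \<Theta>) (length \<Delta>) T)"
proof (induction T arbitrary: \<Delta>)
  case (AllK T1 T2)
  then show ?case using AllK.IH(2)[of "TVarB T1 # \<Delta>"] by (auto intro: wf_ty_rebind)
next
  case (AllT T1 T2)
  then show ?case using AllT.IH(2)[of "TVarB T1 # \<Delta>"] by (auto intro: wf_ty_rebind)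
qed (auto simp: nth_append)

lemma wf_ty_weaken: "wf_ty \<Gamma> T \<Longrightarrow> wf_ty (\<Theta> @ \<Gamma>) (shift_ty (length \<Theta>) 0 T)"
  using wf_ty_shift_ty[of "[]"] by simp

lemma wf_ty_subst_ty:
  assumes "wf_ty (\<Delta> @ TVarB B # \<Gamma>) T" "wf_ty \<Gamma> S" "map is_TVarB \<Delta>' = map is_TVarB \<Delta>"
  shows "wf_ty (\<Delta>' @ \<Gamma>) (subst_ty (length \<Delta>) S T)"
  using assms
proof (induction T arbitrary: \<Delta> \<Delta>')
  case (TV i)
  have len: "length \<Delta>' = length \<Delta>" by (metis TV(3) length_map)
  consider "i < length \<Delta>" | "i = length \<Delta>" | "i > length \<Delta>" by linarith
  then show ?case
  proof cases
    case 1
    then have "is_TVarB (\<Delta>' ! i) = is_TVarB (\<Delta> ! i)" by (metis TV(3) len nth_map)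
    then show ?thesis using 1 TV(1) len by (auto simp: nth_append ex_TVarB_iff)
  next
    case 2
    then show ?thesis using wf_ty_weaken[OF TV(2), of \<Delta>'] len by simp
  next
    case 3
    then show ?thesis using TV(1) len by (auto simp: nth_append)
  qed
next
  case (AllK T1 T2)
  then show ?case
    using AllK.IH(2)[of "TVarB T1 # \<Delta>" "TVarB (subst_ty (length \<Delta>) S T1) # \<Delta>'"] by simp
next
  case (AllT T1 T2)
  then show ?case
    using AllT.IH(2)[of "TVarB T1 # \<Delta>" "TVarB (subst_ty (length \<Delta>) S T1) # \<Delta>'"] by simp
qed simp_all

lemma wf_ty_drop_lookup:
  "wf_env \<Gamma> \<Longrightarrow> i < length \<Gamma> \<Longrightarrow> \<Gamma> ! i = TVarB U \<or> \<Gamma> ! i = VarB U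
    \<Longrightarrow> wf_ty (drop (Suc i) \<Gamma>) U"
proof (induction \<Gamma> arbitrary: i)
  case (Cons b \<Gamma>)
  then show ?case by (cases b; cases i) auto
qed simp

lemma wf_ty_lookup:
  assumes "wf_env \<Gamma>" "i < length \<Gamma>" "\<Gamma> ! i = TVarB U \<or> \<Gamma> ! i = VarB U"
  shows "wf_ty \<Gamma> (shift_ty (Suc i) 0 U)"
  using wf_ty_weaken[OF wf_ty_drop_lookup[OF assms], of "take (Suc i) \<Gamma>"] assms(2) by simp

lemma top_ty_lookup:
  "top_env \<Gamma> \<Longrightarrow> i < length \<Gamma> \<Longrightarrow> \<Gamma> ! i = TVarB U \<or> \<Gamma> ! i = VarB U \<Longrightarrow> top_ty U"
  unfolding top_env_def by (metis nth_mem top_bind.simps)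

fun shift_bind :: "nat \<Rightarrow> nat \<Rightarrow> bind \<Rightarrow> bind" where
  "shift_bind n k (VarB T) = VarB (shift_ty n k T)"
| "shift_bind n k (TVarB T) = TVarB (shift_ty n k T)"

fun shift_env :: "nat \<Rightarrow> env \<Rightarrow> env" where
  "shift_env n [] = []"
| "shift_env n (B # \<Delta>) = shift_bind n (length \<Delta>) B # shift_env n \<Delta>"

fun subst_bind :: "nat \<Rightarrow> ty \<Rightarrow> bind \<Rightarrow> bind" where
  "subst_bind k S (VarB T) = VarB (subst_ty k S T)"
| "subst_bind k S (TVarB T) = TVarB (subst_ty k S T)"

fun subst_env :: "ty \<Rightarrow> env \<Rightarrow> env" where
  "subst_env S [] = []"
| "subst_env S (B # \<Delta>) = subst_bind (length \<Delta>) S B # subst_env S \<Delta>"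

lemma length_shift_env [simp]: "length (shift_env n \<Delta>) = length \<Delta>"
  by (induction \<Delta>) auto

lemma length_subst_env [simp]: "length (subst_env S \<Delta>) = length \<Delta>"
  by (induction \<Delta>) auto

lemma nth_shift_env:
  "i < length \<Delta> \<Longrightarrow> shift_env n \<Delta> ! i = shift_bind n (length \<Delta> - Suc i) (\<Delta> ! i)"
  by (induction \<Delta> arbitrary: i) (auto simp: nth_Cons split: nat.splits)

lemma nth_subst_env:
  "i < length \<Delta> \<Longrightarrow> subst_env S \<Delta> ! i = subst_bind (length \<Delta> - Suc i) S (\<Delta> ! i)"
  by (induction \<Delta> arbitrary: i) (auto simp: nth_Cons split: nat.splits)

inductive alg_sub :: "env \<Rightarrow> ty \<Rightarrow> ty \<Rightarrow> bool" where
  AS_Top: "alg_sub \<Gamma> S TTop"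
| AS_Refl: "alg_sub \<Gamma> (TV i) (TV i)"
| AS_Var: "\<lbrakk>i < length \<Gamma>; \<Gamma> ! i = TVarB U; alg_sub \<Gamma> (shift_ty (Suc i) 0 U) T\<rbrakk>
           \<Longrightarrow> alg_sub \<Gamma> (TV i) T"
| AS_Arr: "\<lbrakk>alg_sub \<Gamma> S' S; alg_sub \<Gamma> T T'\<rbrakk> \<Longrightarrow> alg_sub \<Gamma> (Arr S T) (Arr S' T')"
| AS_AllFun: "alg_sub (TVarB S # \<Gamma>) T T' \<Longrightarrow> alg_sub \<Gamma> (AllK S T) (AllK S T')"
| AS_AllLoc: "\<lbrakk>alg_sub \<Gamma> T0 S0; alg_sub (TVarB S0 # \<Gamma>) S1 T1\<rbrakk>
              \<Longrightarrow> alg_sub \<Gamma> (AllK S0 S1) (AllT T0 T1)"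
| AS_AllTop: "\<lbrakk>alg_sub \<Gamma> T0 S0; alg_sub (TVarB TTop # \<Gamma>) S1 T1\<rbrakk>
              \<Longrightarrow> alg_sub \<Gamma> (AllT S0 S1) (AllT T0 T1)"

lemma alg_sub_refl: "alg_sub \<Gamma> T T"
  by (induction T arbitrary: \<Gamma>) (auto intro: alg_sub.intros)

lemma alg_sub_TTopD: "alg_sub \<Gamma> TTop T \<Longrightarrow> T = TTop"
  by (cases rule: alg_sub.cases) auto

lemma alg_sub_Arr_cases:
  "alg_sub \<Gamma> (Arr Q1 Q2) T
    \<Longrightarrow> T = TTop \<or> (\<exists>T1 T2. T = Arr T1 T2 \<and> alg_sub \<Gamma> T1 Q1 \<and> alg_sub \<Gamma> Q2 T2)"
  by (cases rule: alg_sub.cases) auto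

lemma alg_sub_AllK_cases:
  "alg_sub \<Gamma> (AllK Q0 Q1) T
    \<Longrightarrow> T = TTop
      \<or> (\<exists>T1. T = AllK Q0 T1 \<and> alg_sub (TVarB Q0 # \<Gamma>) Q1 T1)
      \<or> (\<exists>T0 T1. T = AllT T0 T1 \<and> alg_sub \<Gamma> T0 Q0 \<and> alg_sub (TVarB Q0 # \<Gamma>) Q1 T1)"
  by (cases rule: alg_sub.cases) auto

lemma alg_sub_AllT_cases:
  "alg_sub \<Gamma> (AllT Q0 Q1) T
    \<Longrightarrow> T = TTop
      \<or> (\<exists>T0 T1. T = AllT T0 T1 \<and> alg_sub \<Gamma> T0 Q0 \<and> alg_sub (TVarB TTop # \<Gamma>) Q1 T1)"
  by (cases rule: alg_sub.cases) auto

lemma alg_sub_narrow_TTop: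
  "alg_sub \<Gamma>' A B \<Longrightarrow> \<Gamma>' = \<Delta> @ TVarB TTop # \<Gamma> \<Longrightarrow> alg_sub (\<Delta> @ TVarB X # \<Gamma>) A B"
proof (induction arbitrary: \<Delta> rule: alg_sub.induct)
  case (AS_Var i \<Gamma>' U T)
  show ?case
  proof (cases "i = length \<Delta>")
    case True
    then have "U = TTop" using AS_Var by (simp add: nth_append)
    then have "T = TTop" using AS_Var(3) alg_sub_TTopD by simp
    then show ?thesis by (simp add: AS_Top)
  next
    case False
    then have "(\<Delta> @ TVarB X # \<Gamma>) ! i = TVarB U"
      using AS_Var by (auto simp: nth_append split: if_splits)
    then show ?thesis using AS_Var by (auto intro: alg_sub.AS_Var)
  qed
next
  case (AS_AllFun S \<Gamma>' T T')
  then show ?case using AS_AllFun.IH[of "TVarB S # \<Delta>"] by (auto intro: alg_sub.intros)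
next
  case (AS_AllLoc \<Gamma>' T0 S0 S1 T1)
  then show ?case using AS_AllLoc.IH(2)[of "TVarB S0 # \<Delta>"] by (auto intro: alg_sub.intros)
next
  case (AS_AllTop \<Gamma>' T0 S0 S1 T1)
  then show ?case using AS_AllTop.IH(2)[of "TVarB TTop # \<Delta>"] by (auto intro: alg_sub.intros)
qed (auto intro: alg_sub.intros)

lemma alg_sub_trans: "alg_sub \<Gamma> S Q \<Longrightarrow> alg_sub \<Gamma> Q T \<Longrightarrow> alg_sub \<Gamma> S T"
proof (induction Q arbitrary: \<Gamma> S T rule: measure_induct_rule[of size])
  case (less Q)
  have "alg_sub \<Gamma> S Q' \<Longrightarrow> Q' = Q \<Longrightarrow> alg_sub \<Gamma> Q' T \<Longrightarrow> alg_sub \<Gamma> S T" for \<Gamma> S Q' T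
  proof (induction arbitrary: T rule: alg_sub.induct)
    case (AS_Top \<Gamma> S)
    then have "T = TTop" using alg_sub_TTopD by blast
    then show ?case by (simp add: alg_sub.AS_Top)
  next
    case (AS_Var i \<Gamma> U Q')
    have "alg_sub \<Gamma> (shift_ty (Suc i) 0 U) T" using AS_Var.IH AS_Var.prems by blast
    with AS_Var.hyps(1,2) show ?case by (rule alg_sub.AS_Var)
  next
    case (AS_Arr \<Gamma> Q1 S1 S2 Q2)
    then have "size Q1 < size Q" "size Q2 < size Q" by auto
    with alg_sub_Arr_cases[OF AS_Arr.prems(2)] show ?case
      using less.IH AS_Arr.hyps by (blast intro: alg_sub.AS_Top alg_sub.AS_Arr)
  next
    case (AS_AllFun S0 \<Gamma> S1 Q1)
    then have "size Q1 < size Q" by auto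
    with alg_sub_AllK_cases[OF AS_AllFun.prems(2)] show ?case
      using less.IH AS_AllFun.hyps
      by (blast intro: alg_sub.AS_Top alg_sub.AS_AllFun alg_sub.AS_AllLoc)
  next
    case (AS_AllLoc \<Gamma> Q0 S0 S1 Q1)
    then have "size Q0 < size Q" "size Q1 < size Q" by auto
    with alg_sub_AllT_cases[OF AS_AllLoc.prems(2)] show ?case
      using less.IH AS_AllLoc.hyps alg_sub_narrow_TTop[where \<Delta> = "[]", simplified]
      by (blast intro: alg_sub.AS_Top alg_sub.AS_AllLoc)
  next
    case (AS_AllTop \<Gamma> Q0 S0 S1 Q1)
    then have "size Q0 < size Q" "size Q1 < size Q" by auto
    with alg_sub_AllT_cases[OF AS_AllTop.prems(2)] show ?case
      using less.IH AS_AllTop.hyps by (blast intro: alg_sub.AS_Top alg_sub.AS_AllTop)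
  qed simp
  then show ?case using less.prems by blast
qed

lemma lookup_shift_env:
  assumes "i < length (\<Delta> @ \<Gamma>)" "(\<Delta> @ \<Gamma>) ! i = TVarB U"
  obtains j U' where "j < length (shift_env 1 \<Delta> @ X # \<Gamma>)" "(shift_env 1 \<Delta> @ X # \<Gamma>) ! j = TVarB U'"
    "shift_ty 1 (length \<Delta>) (TV i) = TV j"
    "shift_ty 1 (length \<Delta>) (shift_ty (Suc i) 0 U) = shift_ty (Suc j) 0 U'"
proof (cases "i < length \<Delta>")
  case True
  have "length \<Delta> = (length \<Delta> - Suc i) + Suc i" using True by simp
  then have "shift_ty 1 (length \<Delta>) (shift_ty (Suc i) 0 U)
      = shift_ty (Suc i) 0 (shift_ty 1 (length \<Delta> - Suc i) U)"
    using shift_ty_shift_ty_comm[of 0 "length \<Delta> - Suc i" 1 "Suc i" U] by (simp only:)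
  with True assms show ?thesis
    by (intro that[of i "shift_ty 1 (length \<Delta> - Suc i) U"]) (simp_all add: nth_append nth_shift_env)
next
  case False
  have "shift_ty 1 (length \<Delta>) (shift_ty (Suc i) 0 U) = shift_ty (Suc (Suc i)) 0 U"
    using shift_ty_shift_ty_merge[of 0 "length \<Delta>" "Suc i" 1 U] False by simp
  with False assms show ?thesis
    by (intro that[of "Suc i" U]) (simp_all add: nth_append Suc_diff_le)
qed

lemma alg_sub_weaken:
  "alg_sub \<Gamma>' A B \<Longrightarrow> \<Gamma>' = \<Delta> @ \<Gamma> \<Longrightarrow>
    alg_sub (shift_env 1 \<Delta> @ X # \<Gamma>) (shift_ty 1 (length \<Delta>) A) (shift_ty 1 (length \<Delta>) B)"
proof (induction arbitrary: \<Delta> rule: alg_sub.induct)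
  case (AS_Var i \<Gamma>' U T)
  then have "i < length (\<Delta> @ \<Gamma>)" "(\<Delta> @ \<Gamma>) ! i = TVarB U" by simp_all
  then obtain j U' where j: "j < length (shift_env 1 \<Delta> @ X # \<Gamma>)"
      "(shift_env 1 \<Delta> @ X # \<Gamma>) ! j = TVarB U'" "shift_ty 1 (length \<Delta>) (TV i) = TV j"
      "shift_ty 1 (length \<Delta>) (shift_ty (Suc i) 0 U) = shift_ty (Suc j) 0 U'"
    by (rule lookup_shift_env)
  have "alg_sub (shift_env 1 \<Delta> @ X # \<Gamma>) (shift_ty (Suc j) 0 U') (shift_ty 1 (length \<Delta>) T)"
    using AS_Var.IH[OF AS_Var.prems] j(4) by simp
  with j(1,2) have "alg_sub (shift_env 1 \<Delta> @ X # \<Gamma>) (TV j) (shift_ty 1 (length \<Delta>) T)"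
    by (rule alg_sub.AS_Var)
  then show ?case using j(3) by simp
next
  case (AS_Refl \<Gamma>' i)
  then show ?case by (simp add: alg_sub_refl)
next
  case (AS_AllFun S \<Gamma>' T T')
  then show ?case using AS_AllFun.IH[of "TVarB S # \<Delta>"] by (auto intro: alg_sub.intros)
next
  case (AS_AllLoc \<Gamma>' T0 S0 S1 T1)
  then show ?case using AS_AllLoc.IH(2)[of "TVarB S0 # \<Delta>"] by (auto intro: alg_sub.intros)
next
  case (AS_AllTop \<Gamma>' T0 S0 S1 T1)
  then show ?case using AS_AllTop.IH(2)[of "TVarB TTop # \<Delta>"] by (auto intro: alg_sub.intros)
qed (auto intro: alg_sub.intros)

lemma lookup_subst_env:
  assumes "i < length (\<Delta> @ TVarB B # \<Gamma>)" "(\<Delta> @ TVarB B # \<Gamma>) ! i = TVarB U" "i \<noteq> length \<Delta>"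
  obtains j U' where "j < length (subst_env S \<Delta> @ \<Gamma>)" "(subst_env S \<Delta> @ \<Gamma>) ! j = TVarB U'"
    "subst_ty (length \<Delta>) S (TV i) = TV j"
    "subst_ty (length \<Delta>) S (shift_ty (Suc i) 0 U) = shift_ty (Suc j) 0 U'"
proof (cases "i < length \<Delta>")
  case True
  have "length \<Delta> = (length \<Delta> - Suc i) + Suc i" using True by simp
  then have "subst_ty (length \<Delta>) S (shift_ty (Suc i) 0 U)
      = shift_ty (Suc i) 0 (subst_ty (length \<Delta> - Suc i) S U)"
    using subst_ty_shift_ty_comm[OF le0, of "length \<Delta> - Suc i" "Suc i" S U] by (simp only:)
  with True assms show ?thesis
    by (intro that[of i "subst_ty (length \<Delta> - Suc i) S U"]) (simp_all add: nth_append nth_subst_env)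
next
  case False
  then have i: "length \<Delta> < i" using assms(3) by simp
  then have "\<Gamma> ! (i - Suc (length \<Delta>)) = TVarB U"
    using assms(2) by (simp add: nth_append nth_Cons')
  moreover have "\<not> i - 1 < length \<Delta>" "i - 1 - length \<Delta> = i - Suc (length \<Delta>)"
    using i by auto
  ultimately have "(subst_env S \<Delta> @ \<Gamma>) ! (i - 1) = TVarB U"
    by (simp add: nth_append del: One_nat_def)
  moreover have "subst_ty (length \<Delta>) S (shift_ty (Suc i) 0 U) = shift_ty (Suc (i - 1)) 0 U"
    using subst_ty_shift_ty_cancel[of 0 "length \<Delta>" "Suc i" S U] i by simp
  ultimately show ?thesis using i assms(1) by (intro that[of "i - 1" U]) auto
qed

lemma alg_sub_subst_TTop:
  "alg_sub \<Gamma>' A B \<Longrightarrow> \<Gamma>' = \<Delta> @ TVarB TTop # \<Gamma> \<Longrightarrow>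
    alg_sub (subst_env S \<Delta> @ \<Gamma>) (subst_ty (length \<Delta>) S A) (subst_ty (length \<Delta>) S B)"
proof (induction arbitrary: \<Delta> rule: alg_sub.induct)
  case (AS_Var i \<Gamma>' U T)
  show ?case
  proof (cases "i = length \<Delta>")
    case True
    then have "U = TTop" using AS_Var by (simp add: nth_append)
    then have "T = TTop" using AS_Var(3) alg_sub_TTopD by simp
    then show ?thesis by (simp add: alg_sub.AS_Top)
  next
    case False
    have "i < length (\<Delta> @ TVarB TTop # \<Gamma>)" "(\<Delta> @ TVarB TTop # \<Gamma>) ! i = TVarB U"
      using AS_Var by simp_all
    then obtain j U' where j: "j < length (subst_env S \<Delta> @ \<Gamma>)"
        "(subst_env S \<Delta> @ \<Gamma>) ! j = TVarB U'" "subst_ty (length \<Delta>) S (TV i) = TV j"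
        "subst_ty (length \<Delta>) S (shift_ty (Suc i) 0 U) = shift_ty (Suc j) 0 U'"
      using False by (rule lookup_subst_env)
    have "alg_sub (subst_env S \<Delta> @ \<Gamma>) (shift_ty (Suc j) 0 U') (subst_ty (length \<Delta>) S T)"
      using AS_Var.IH[OF AS_Var.prems] j(4) by simp
    with j(1,2) have "alg_sub (subst_env S \<Delta> @ \<Gamma>) (TV j) (subst_ty (length \<Delta>) S T)"
      by (rule alg_sub.AS_Var)
    then show ?thesis using j(3) by simp
  qed
next
  case (AS_Refl \<Gamma>' i)
  then show ?case by (simp add: alg_sub_refl)
next
  case (AS_AllFun S0 \<Gamma>' T T')
  then show ?case using AS_AllFun.IH[of "TVarB S0 # \<Delta>"] by (auto intro: alg_sub.intros)
next
  case (AS_AllLoc \<Gamma>' T0 S0 S1 T1)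
  then show ?case using AS_AllLoc.IH(2)[of "TVarB S0 # \<Delta>"] by (auto intro: alg_sub.intros)
next
  case (AS_AllTop \<Gamma>' T0 S0 S1 T1)
  then show ?case using AS_AllTop.IH(2)[of "TVarB TTop # \<Delta>"] by (auto intro: alg_sub.intros)
qed (auto intro: alg_sub.intros)

lemma subK_imp_alg_sub: "subK \<Gamma> S T \<Longrightarrow> alg_sub \<Gamma> S T"
proof (induction rule: subK.induct)
  case (SK_Trans \<Gamma> S U T)
  then show ?case using alg_sub_trans by blast
qed (auto intro: alg_sub.intros alg_sub_refl)

lemma alg_sub_imp_subT:
  "\<lbrakk>alg_sub \<Gamma> S T; wf_env \<Gamma>; top_env \<Gamma>; wf_ty \<Gamma> S; wf_ty \<Gamma> T; top_ty S; top_ty T\<rbrakk>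
    \<Longrightarrow> subT \<Gamma> S T"
proof (induction rule: alg_sub.induct)
  case (AS_Top \<Gamma> S)
  then show ?case by (simp add: subT.ST_Top)
next
  case (AS_Refl \<Gamma> i)
  then show ?case by (simp add: subT.ST_Refl)
next
  case (AS_Var i \<Gamma> U T)
  then have "subT \<Gamma> (shift_ty (Suc i) 0 U) T"
    using wf_ty_lookup[of \<Gamma> i U] top_ty_lookup[of \<Gamma> i U] by simp
  then show ?case using subT.ST_Var[of \<Gamma> i U] AS_Var.prems AS_Var.hyps subT.ST_Trans by blast
next
  case (AS_AllTop \<Gamma> T0 S0 S1 T1)
  have "top_env (TVarB TTop # \<Gamma>)" using AS_AllTop.prems by (simp add: top_env_def)
  moreover have "wf_ty (TVarB TTop # \<Gamma>) S1" "wf_ty (TVarB TTop # \<Gamma>) T1"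
    using AS_AllTop.prems by (auto intro: wf_ty_rebind)
  ultimately have "subT (TVarB TTop # \<Gamma>) S1 T1" using AS_AllTop by simp
  then show ?case using AS_AllTop by (simp add: subT.ST_AllTop)
qed (simp_all add: subT.ST_Arr)

lemma typK_top_inv: "typK \<Gamma> top A \<Longrightarrow> alg_sub \<Gamma> TTop A"
proof (induction \<Gamma> "top" A rule: typK.induct)
  case (TK_Sub \<Gamma> T T')
  then show ?case using alg_sub_trans subK_imp_alg_sub by blast
qed (auto intro: alg_sub_refl)

lemma typK_Var_inv:
  "typK \<Gamma> (V i) A \<Longrightarrow> \<exists>U. i < length \<Gamma> \<and> \<Gamma> ! i = VarB U \<and> alg_sub \<Gamma> (shift_ty (Suc i) 0 U) A"
proof (induction \<Gamma> "V i" A rule: typK.induct)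
  case (TK_Sub \<Gamma> T T')
  then show ?case using alg_sub_trans subK_imp_alg_sub by blast
qed (auto intro: alg_sub_refl)

lemma typK_Lam_inv:
  "typK \<Gamma> (Lam S t) A \<Longrightarrow> \<exists>B. typK (VarB S # \<Gamma>) t (shift_ty 1 0 B) \<and> alg_sub \<Gamma> (Arr S B) A"
proof (induction \<Gamma> "Lam S t" A rule: typK.induct)
  case (TK_Sub \<Gamma> T T')
  then show ?case using alg_sub_trans subK_imp_alg_sub by blast
qed (auto intro: alg_sub_refl)

lemma typK_TLam_inv:
  "typK \<Gamma> (TLam S t) A \<Longrightarrow> \<exists>B. typK (TVarB S # \<Gamma>) t B \<and> alg_sub \<Gamma> (AllK S B) A"
proof (induction \<Gamma> "TLam S t" A rule: typK.induct)
  case (TK_Sub \<Gamma> T T')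
  then show ?case using alg_sub_trans subK_imp_alg_sub by blast
qed (auto intro: alg_sub_refl)

lemma typK_App_inv:
  "typK \<Gamma> (App t s) A \<Longrightarrow> \<exists>A1 B1. typK \<Gamma> t (Arr A1 B1) \<and> typK \<Gamma> s A1 \<and> alg_sub \<Gamma> B1 A"
proof (induction \<Gamma> "App t s" A rule: typK.induct)
  case (TK_Sub \<Gamma> T T')
  then show ?case using alg_sub_trans subK_imp_alg_sub by blast
qed (auto intro: alg_sub_refl)

lemma typK_TApp_inv:
  "typK \<Gamma> (TApp t S') A
    \<Longrightarrow> \<exists>S0 T0. typK \<Gamma> t (AllT S0 T0) \<and> subK \<Gamma> S' S0 \<and> alg_sub \<Gamma> (subst_ty 0 S' T0) A"
proof (induction \<Gamma> "TApp t S'" A rule: typK.induct)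
  case (TK_Sub \<Gamma> T T')
  then show ?case using alg_sub_trans subK_imp_alg_sub by blast
qed (auto intro: alg_sub_refl)

lemma alg_sub_Arr_exposure:
  assumes "alg_sub \<Gamma> M (Arr A B)" "wf_env \<Gamma>" "top_env \<Gamma>" "wf_ty \<Gamma> M" "top_ty M"
  shows "\<exists>A' B'. subT \<Gamma> M (Arr A' B') \<and> top_ty A' \<and> top_ty B' \<and> wf_ty \<Gamma> A' \<and> wf_ty \<Gamma> B'
           \<and> alg_sub \<Gamma> A A' \<and> alg_sub \<Gamma> B' B"
  using assms
proof (induction \<Gamma> M "Arr A B" rule: alg_sub.induct)
  case (AS_Var i \<Gamma> U)
  then obtain A' B' where "subT \<Gamma> (shift_ty (Suc i) 0 U) (Arr A' B')" "top_ty A'" "top_ty B'"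
      "wf_ty \<Gamma> A'" "wf_ty \<Gamma> B'" "alg_sub \<Gamma> A A'" "alg_sub \<Gamma> B' B"
    using wf_ty_lookup[of \<Gamma> i U] top_ty_lookup[of \<Gamma> i U] by auto
  with AS_Var show ?case by (blast intro: subT.ST_Var subT.ST_Trans)
next
  case (AS_Arr \<Gamma> S T)
  then show ?case by (intro exI[of _ S] exI[of _ T]) (simp add: subT.ST_Refl)
qed

lemma alg_sub_AllT_exposure:
  assumes "alg_sub \<Gamma> M (AllT S0 T0)" "wf_env \<Gamma>" "top_env \<Gamma>" "wf_ty \<Gamma> M" "top_ty M"
  shows "\<exists>U0 U1. subT \<Gamma> M (AllT U0 U1) \<and> top_ty U0 \<and> top_ty U1
           \<and> wf_ty \<Gamma> U0 \<and> wf_ty (TVarB U0 # \<Gamma>) U1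
           \<and> alg_sub \<Gamma> S0 U0 \<and> alg_sub (TVarB TTop # \<Gamma>) U1 T0"
  using assms
proof (induction \<Gamma> M "AllT S0 T0" rule: alg_sub.induct)
  case (AS_Var i \<Gamma> U)
  then obtain U0 U1 where "subT \<Gamma> (shift_ty (Suc i) 0 U) (AllT U0 U1)" "top_ty U0" "top_ty U1"
      "wf_ty \<Gamma> U0" "wf_ty (TVarB U0 # \<Gamma>) U1" "alg_sub \<Gamma> S0 U0" "alg_sub (TVarB TTop # \<Gamma>) U1 T0"
    using wf_ty_lookup[of \<Gamma> i U] top_ty_lookup[of \<Gamma> i U] by auto
  with AS_Var show ?case by (blast intro: subT.ST_Var subT.ST_Trans)
next
  case (AS_AllTop \<Gamma> S T)
  then show ?case by (intro exI[of _ S] exI[of _ T]) (simp add: subT.ST_Refl)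
qed auto

fun abstraction :: "tm \<Rightarrow> bool" where
  "abstraction (Lam _ _) = True"
| "abstraction (TLam _ _) = True"
| "abstraction _ = False"

lemma typK_TLam_not_Arr: "\<not> typK \<Gamma> (TLam S t) (Arr A B)"
  using typK_TLam_inv alg_sub_AllK_cases by fastforce

lemma typK_Lam_not_AllT: "\<not> typK \<Gamma> (Lam S t) (AllT A B)"
  using typK_Lam_inv alg_sub_Arr_cases by fastforce

definition typK_reflected :: "env \<Rightarrow> tm \<Rightarrow> bool" where
  "typK_reflected \<Gamma> t \<longleftrightarrow>
    (\<forall>A T. typK \<Gamma> t A \<longrightarrow> alg_sub \<Gamma> A T \<longrightarrow> top_ty T \<longrightarrow> wf_ty \<Gamma> T \<longrightarrow> typT \<Gamma> t T)"

definition typK_minorized :: "env \<Rightarrow> tm \<Rightarrow> bool" where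
  "typK_minorized \<Gamma> t \<longleftrightarrow>
    (\<forall>A. typK \<Gamma> t A \<longrightarrow> (\<exists>M. top_ty M \<and> wf_ty \<Gamma> M \<and> typT \<Gamma> t M \<and> alg_sub \<Gamma> M A))"

lemma typK_reflected_if_minorized:
  assumes "wf_env \<Gamma>" "top_env \<Gamma>" "typK_minorized \<Gamma> t"
  shows "typK_reflected \<Gamma> t"
  unfolding typK_reflected_def
proof (intro allI impI)
  fix A T assume A: "typK \<Gamma> t A" "alg_sub \<Gamma> A T" "top_ty T" "wf_ty \<Gamma> T"
  then obtain M where M: "top_ty M" "wf_ty \<Gamma> M" "typT \<Gamma> t M" "alg_sub \<Gamma> M A"
    using assms(3) unfolding typK_minorized_def by blast
  have "subT \<Gamma> M T"
    using alg_sub_trans[OF M(4) A(2)] assms(1,2) M(2) A(4) M(1) A(3) by (rule alg_sub_imp_subT)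
  with M(3) show "typT \<Gamma> t T" by (rule TT_Sub)
qed

lemma typK_minorized_top: "wf_env \<Gamma> \<Longrightarrow> typK_minorized \<Gamma> top"
  unfolding typK_minorized_def by (auto intro!: exI[of _ TTop] TT_Top typK_top_inv)

lemma typK_minorized_Var:
  assumes "wf_env \<Gamma>" "top_env \<Gamma>"
  shows "typK_minorized \<Gamma> (V i)"
  unfolding typK_minorized_def
proof (intro allI impI)
  fix A assume "typK \<Gamma> (V i) A"
  then obtain U where "i < length \<Gamma>" "\<Gamma> ! i = VarB U" "alg_sub \<Gamma> (shift_ty (Suc i) 0 U) A"
    using typK_Var_inv by blast
  moreover have "typT \<Gamma> (V i) (shift_ty (Suc i) 0 U)"
    using assms(1) calculation(1,2) by (rule TT_Var)
  ultimately show "\<exists>M. top_ty M \<and> wf_ty \<Gamma> M \<and> typT \<Gamma> (V i) M \<and> alg_sub \<Gamma> M A"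
    using assms wf_ty_lookup[of \<Gamma> i U] top_ty_lookup[of \<Gamma> i U]
    by (auto intro!: exI[of _ "shift_ty (Suc i) 0 U"])
qed

lemma typK_reflected_Lam:
  assumes "wf_env \<Gamma>" "top_env \<Gamma>" "wf_ty \<Gamma> S" "top_ty S" "typK_reflected (VarB S # \<Gamma>) u"
  shows "typK_reflected \<Gamma> (Lam S u)"
  unfolding typK_reflected_def
proof (intro allI impI)
  fix A T assume A: "typK \<Gamma> (Lam S u) A" "alg_sub \<Gamma> A T" "top_ty T" "wf_ty \<Gamma> T"
  obtain B where B: "typK (VarB S # \<Gamma>) u (shift_ty 1 0 B)" "alg_sub \<Gamma> (Arr S B) A"
    using typK_Lam_inv[OF A(1)] by blast
  have "alg_sub \<Gamma> (Arr S B) T" using B(2) A(2) alg_sub_trans by blast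
  from alg_sub_Arr_cases[OF this] show "typT \<Gamma> (Lam S u) T"
  proof (elim disjE exE conjE)
    assume "T = TTop"
    have "typT (VarB S # \<Gamma>) u TTop"
      using assms(5) B(1) AS_Top unfolding typK_reflected_def by simp
    then have "typT \<Gamma> (Lam S u) (Arr S TTop)" using TT_Abs[of S \<Gamma> u TTop] by simp
    moreover have "subT \<Gamma> (Arr S TTop) TTop" using assms(1,3) by (simp add: ST_Top)
    ultimately show ?thesis using \<open>T = TTop\<close> by (simp add: TT_Sub)
  next
    fix T1 T2 assume T: "T = Arr T1 T2" "alg_sub \<Gamma> T1 S" "alg_sub \<Gamma> B T2"
    have "alg_sub (VarB S # \<Gamma>) (shift_ty 1 0 B) (shift_ty 1 0 T2)"
      using alg_sub_weaken[OF T(3), of "[]"] by simp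
    moreover have "wf_ty (VarB S # \<Gamma>) (shift_ty 1 0 T2)"
      using wf_ty_weaken[of \<Gamma> T2 "[VarB S]"] A T by simp
    ultimately have "typT (VarB S # \<Gamma>) u (shift_ty 1 0 T2)"
      using assms(5) B(1) A T unfolding typK_reflected_def by auto
    then have "typT \<Gamma> (Lam S u) (Arr S T2)" by (rule TT_Abs)
    moreover have "subT \<Gamma> (Arr S T2) (Arr T1 T2)"
      using alg_sub_imp_subT[OF T(2)] assms A T by (simp add: ST_Arr ST_Refl)
    ultimately show ?thesis unfolding T(1) by (rule TT_Sub)
  qed
qed

lemma typK_reflected_TLam:
  assumes "wf_env \<Gamma>" "top_env \<Gamma>" "wf_ty \<Gamma> S" "top_ty S" "typK_reflected (TVarB S # \<Gamma>) u"
  shows "typK_reflected \<Gamma> (TLam S u)"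
  unfolding typK_reflected_def
proof (intro allI impI)
  fix A T assume A: "typK \<Gamma> (TLam S u) A" "alg_sub \<Gamma> A T" "top_ty T" "wf_ty \<Gamma> T"
  obtain B where B: "typK (TVarB S # \<Gamma>) u B" "alg_sub \<Gamma> (AllK S B) A"
    using typK_TLam_inv[OF A(1)] by blast
  have "alg_sub \<Gamma> (AllK S B) T" using B(2) A(2) alg_sub_trans by blast
  from alg_sub_AllK_cases[OF this] show "typT \<Gamma> (TLam S u) T"
  proof (elim disjE exE conjE)
    assume "T = TTop"
    have "typT (TVarB S # \<Gamma>) u TTop"
      using assms(5) B(1) AS_Top unfolding typK_reflected_def by simp
    then have "typT \<Gamma> (TLam S u) (AllT S TTop)" by (rule TT_TAbs)
    moreover have "subT \<Gamma> (AllT S TTop) TTop" using assms(1,3) by (simp add: ST_Top)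
    ultimately show ?thesis using \<open>T = TTop\<close> by (simp add: TT_Sub)
  next
    fix T1 assume "T = AllK S T1"
    then show ?thesis using A(3) by simp
  next
    fix T0 T1 assume T: "T = AllT T0 T1" "alg_sub \<Gamma> T0 S" "alg_sub (TVarB S # \<Gamma>) B T1"
    have "wf_ty (TVarB S # \<Gamma>) T1" using A(4) T(1) by (auto intro: wf_ty_rebind)
    then have "typT (TVarB S # \<Gamma>) u T1"
      using assms(5) B(1) A(3) T unfolding typK_reflected_def by auto
    then have "typT \<Gamma> (TLam S u) (AllT S T1)" by (rule TT_TAbs)
    moreover have "subT \<Gamma> (AllT S T1) (AllT T0 T1)"
    proof (rule ST_AllTop)
      show "subT \<Gamma> T0 S" using alg_sub_imp_subT[OF T(2)] assms A T by simp
      show "subT (TVarB TTop # \<Gamma>) T1 T1"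
        using assms(1) \<open>wf_ty (TVarB S # \<Gamma>) T1\<close> by (auto intro: ST_Refl wf_ty_rebind)
    qed
    ultimately show ?thesis unfolding T(1) by (rule TT_Sub)
  qed
qed

lemma typK_minorized_App:
  assumes "wf_env \<Gamma>" "top_env \<Gamma>" "typK_minorized \<Gamma> n" "typK_reflected \<Gamma> s"
  shows "typK_minorized \<Gamma> (App n s)"
  unfolding typK_minorized_def
proof (intro allI impI)
  fix A assume "typK \<Gamma> (App n s) A"
  then obtain A1 B1 where h: "typK \<Gamma> n (Arr A1 B1)" "typK \<Gamma> s A1" "alg_sub \<Gamma> B1 A"
    using typK_App_inv by blast
  then obtain M where M: "top_ty M" "wf_ty \<Gamma> M" "typT \<Gamma> n M" "alg_sub \<Gamma> M (Arr A1 B1)"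
    using assms(3) unfolding typK_minorized_def by blast
  then obtain A' B' where e: "subT \<Gamma> M (Arr A' B')" "top_ty A'" "top_ty B'" "wf_ty \<Gamma> A'"
      "wf_ty \<Gamma> B'" "alg_sub \<Gamma> A1 A'" "alg_sub \<Gamma> B' B1"
    using alg_sub_Arr_exposure assms(1,2) by blast
  have "typT \<Gamma> n (Arr A' B')" using M(3) e(1) by (rule TT_Sub)
  moreover have "typT \<Gamma> s A'" using assms(4) h(2) e unfolding typK_reflected_def by blast
  ultimately have "typT \<Gamma> (App n s) B'" by (rule TT_App)
  moreover have "alg_sub \<Gamma> B' A" using e(7) h(3) by (rule alg_sub_trans)
  ultimately show "\<exists>M. top_ty M \<and> wf_ty \<Gamma> M \<and> typT \<Gamma> (App n s) M \<and> alg_sub \<Gamma> M A"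
    using e by blast
qed

lemma typK_minorized_TApp:
  assumes "wf_env \<Gamma>" "top_env \<Gamma>" "typK_minorized \<Gamma> n" "wf_ty \<Gamma> S'" "top_ty S'"
  shows "typK_minorized \<Gamma> (TApp n S')"
  unfolding typK_minorized_def
proof (intro allI impI)
  fix A assume "typK \<Gamma> (TApp n S') A"
  then obtain S0 T0 where h: "typK \<Gamma> n (AllT S0 T0)" "subK \<Gamma> S' S0"
      "alg_sub \<Gamma> (subst_ty 0 S' T0) A"
    using typK_TApp_inv by blast
  then obtain M where M: "top_ty M" "wf_ty \<Gamma> M" "typT \<Gamma> n M" "alg_sub \<Gamma> M (AllT S0 T0)"
    using assms(3) unfolding typK_minorized_def by blast
  then obtain U0 U1 where e: "subT \<Gamma> M (AllT U0 U1)" "top_ty U0" "top_ty U1" "wf_ty \<Gamma> U0"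
      "wf_ty (TVarB U0 # \<Gamma>) U1" "alg_sub \<Gamma> S0 U0" "alg_sub (TVarB TTop # \<Gamma>) U1 T0"
    using alg_sub_AllT_exposure assms(1,2) by blast
  have "typT \<Gamma> n (AllT U0 U1)" using M(3) e(1) by (rule TT_Sub)
  moreover have "subT \<Gamma> S' U0"
    using alg_sub_trans[OF subK_imp_alg_sub[OF h(2)] e(6)] assms(1,2,4) e(4) assms(5) e(2)
    by (rule alg_sub_imp_subT)
  ultimately have "typT \<Gamma> (TApp n S') (subst_ty 0 S' U1)" by (rule TT_TApp)
  moreover have "top_ty (subst_ty 0 S' U1)" using assms(5) e(3) by (rule top_ty_subst_ty)
  moreover have "wf_ty \<Gamma> (subst_ty 0 S' U1)"
    using wf_ty_subst_ty[of "[]" U0 \<Gamma> U1 S' "[]"] e(5) assms(4) by simp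
  moreover have "alg_sub \<Gamma> (subst_ty 0 S' U1) A"
    using alg_sub_subst_TTop[OF e(7), of "[]" \<Gamma> S'] h(3) by (simp add: alg_sub_trans)
  ultimately show "\<exists>M. top_ty M \<and> wf_ty \<Gamma> M \<and> typT \<Gamma> (TApp n S') M \<and> alg_sub \<Gamma> M A"
    by blast
qed

lemma beta_normal_typK_reflected:
  assumes "wf_env \<Gamma>" "top_env \<Gamma>" "wf_tm \<Gamma> t" "top_tm t" "beta_normal t"
  shows "typK_reflected \<Gamma> t \<and> (\<not> abstraction t \<longrightarrow> typK_minorized \<Gamma> t)"
  using assms
proof (induction t arbitrary: \<Gamma>)
  case top
  then show ?case by (simp add: typK_minorized_top typK_reflected_if_minorized)
next
  case (V i)
  then show ?case by (simp add: typK_minorized_Var typK_reflected_if_minorized)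
next
  case (Lam S u)
  then have "typK_reflected (VarB S # \<Gamma>) u" by (simp add: top_env_def)
  with Lam.prems show ?case by (simp add: typK_reflected_Lam)
next
  case (TLam S u)
  then have "typK_reflected (TVarB S # \<Gamma>) u" by (simp add: top_env_def)
  with TLam.prems show ?case by (simp add: typK_reflected_TLam)
next
  case (App n s)
  have "typK_minorized \<Gamma> (App n s)"
  proof (cases "abstraction n")
    case True
    with App.prems(5) obtain S u where "n = TLam S u" by (cases n) auto
    then show ?thesis
      using typK_App_inv typK_TLam_not_Arr unfolding typK_minorized_def by blast
  next
    case False
    with App show ?thesis by (simp add: typK_minorized_App)
  qed
  with App.prems show ?case by (simp add: typK_reflected_if_minorized)
next
  case (TApp n S')
  have "typK_minorized \<Gamma> (TApp n S')"
  proof (cases "abstraction n")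
    case True
    with TApp.prems(5) obtain S u where "n = Lam S u" by (cases n) auto
    then show ?thesis
      using typK_TApp_inv typK_Lam_not_AllT unfolding typK_minorized_def by blast
  next
    case False
    with TApp show ?thesis by (simp add: typK_minorized_TApp)
  qed
  with TApp.prems show ?case by (simp add: typK_reflected_if_minorized)
qed

theorem proposition7p3:
  assumes "wf_env \<Theta>" and "top_env \<Theta>"
    and "wf_tm \<Theta> t" and "top_tm t" and "beta_normal t"
    and "wf_ty \<Theta> T" and "top_ty T"
    and "typK \<Theta> t T"
  shows "typT \<Theta> t T"
proof -
  have "typK_reflected \<Theta> t"
    using beta_normal_typK_reflected[OF assms(1-5)] by (rule conjunct1)
  with assms(6-8) alg_sub_refl show ?thesis
    unfolding typK_reflected_def by blast
qed

end
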